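(* Fix $\epsilon > 0$, integers $T_0$ and $T > T_0 + (\frac{1}{2} + 2\epsilon) n \log(n)$. For each $T_0 \le t < T$ let $(i_t, j_t)$ be chosen independently and uniformly at random among all pairs $1 \le i_t < j_t \le n$. Define partitions $\mathcal{P}_t$ of $\{1,\dots,n\}$ for $t = T, T-1, \dots, T_0$ backward in time: $\mathcal{P}_T = \{\{1\},\{2\},\dots,\{n\}\}$, and for $T_0 \le t < T$, if $i_t$ and $j_t$ lie in the same block of $\mathcal{P}_{t+1}$ then $\mathcal{P}_t = \mathcal{P}_{t+1}$, otherwise $\mathcal{P}_t$ is obtained from $\mathcal{P}_{t+1}$ by merging the block containing $i_t$ with the block containing $j_t$. Then for all $n > N_0(\epsilon)$ sufficiently large, $$\mathbb{P}\big[\mathcal{P}_{T_0} = \{\{1,2,\dots,n\}\}\big] \ge 1 - 2n^{-\epsilon},$$ i.e. with probability at least $1 - 2n^{-\epsilon}$ the partition $\mathcal{P}_{T_0}$ consists of the single block $\{1,\dots,n\}$. *)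

theory Defs
  imports "HOL-Probability.Probability"
begin

definition pairs :: "nat \<Rightarrow> (nat \<times> nat) set" where
  "pairs n = {(i, j). 1 \<le> i \<and> i < j \<and> j \<le> n}"

definition block_of :: "nat set set \<Rightarrow> nat \<Rightarrow> nat set" where
  "block_of P i = (THE B. B \<in> P \<and> i \<in> B)"

definition merge_step :: "nat set set \<Rightarrow> nat \<times> nat \<Rightarrow> nat set set" where
  "merge_step P ij = (case ij of (i, j) \<Rightarrow>
     if \<exists>B\<in>P. i \<in> B \<and> j \<in> B then P
     else (P - {block_of P i, block_of P j}) \<union> {block_of P i \<union> block_of P j})"

text \<open>part n T w k is the partition P_(T-k): P_T is the partition into singletons and
  P_t is obtained from P_(t+1) using the pair w t.\<close>
fun part :: "nat \<Rightarrow> int \<Rightarrow> (int \<Rightarrow> nat \<times> nat) \<Rightarrow> nat \<Rightarrow> nat set set" where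
  "part n T w 0 = {{i} | i. i \<in> {1..n}}"
| "part n T w (Suc k) = merge_step (part n T w k) (w (T - int k - 1))"

definition pair_choices :: "nat \<Rightarrow> int \<Rightarrow> int \<Rightarrow> (int \<Rightarrow> nat \<times> nat) pmf" where
  "pair_choices n T0 T = pmf_of_set (PiE {T0..<T} (\<lambda>_. pairs n))"

end

theory Submission
  imports Defs "HOL-Real_Asymp.Real_Asymp"
begin

text \<open>If the final partition is not the single block \<open>{1..n}\<close>, then one of its blocks or
  the complement of that block is a nonempty set \<open>S\<close> with \<open>|S| \<le> n/2\<close> that none of the
  \<open>m = T - T0\<close> chosen pairs crosses. For fixed \<open>S\<close> with \<open>|S| = k\<close> this has probability at most
  \<open>(1 - 2k(n-k)/n\<^sup>2)\<^sup>m \<le> n powr (-(1+4\<epsilon>) k (n-k)/n)\<close>, which is at most \<open>n powr (-(1+2\<epsilon>) k)\<close>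
  when \<open>(1+4\<epsilon>) k \<le> 2\<epsilon>n\<close> and at most \<open>n powr (-\<epsilon>n)\<close> otherwise. A union bound over all
  \<open>S \<subseteq> {1..n}\<close> gives the failure bound \<open>(1 + n powr (-1-2\<epsilon>))\<^sup>n - 1 + 2\<^sup>n n powr (-\<epsilon>n)\<close>,
  which is \<open>O(n powr (-2\<epsilon>))\<close> and hence below \<open>2 n powr (-\<epsilon>)\<close> for large \<open>n\<close>.\<close>

lemma block_of_eq:
  assumes "partition_on A P" "B \<in> P" "i \<in> B"
  shows "block_of P i = B"
  unfolding block_of_def
proof (rule the_equality)
  fix C assume "C \<in> P \<and> i \<in> C"
  then show "C = B"
    using assms partition_onD2[OF assms(1)] by (auto simp: disjoint_def)
qed (use assms in auto)

lemma block_of_mem: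
  assumes "partition_on A P" "i \<in> A"
  obtains "block_of P i \<in> P" "i \<in> block_of P i"
proof -
  obtain B where "B \<in> P" "i \<in> B"
    using assms partition_onD1 by blast
  with that show thesis using block_of_eq[OF assms(1)] by simp
qed

lemma merge_step_merged:
  assumes "\<not> (\<exists>B\<in>P. i \<in> B \<and> j \<in> B)"
  shows "merge_step P (i, j) = (P - {block_of P i, block_of P j}) \<union> {block_of P i \<union> block_of P j}"
  unfolding merge_step_def prod.case using assms by (rule if_not_P)

lemma partition_on_merge_step:
  assumes P: "partition_on A P" and i: "i \<in> A" and j: "j \<in> A"
  shows "partition_on A (merge_step P (i, j))"
proof (cases "\<exists>B\<in>P. i \<in> B \<and> j \<in> B")
  case True
  then show ?thesis using P by (simp add: merge_step_def)
next
  case False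
  define Bi Bj where "Bi = block_of P i" and "Bj = block_of P j"
  obtain Bi: "Bi \<in> P" "i \<in> Bi" using block_of_mem[OF P i] unfolding Bi_def .
  obtain Bj: "Bj \<in> P" "j \<in> Bj" using block_of_mem[OF P j] unfolding Bj_def .
  have disj: "disjoint P" and "\<Union>P = A" "{} \<notin> P"
    using P by (auto simp: partition_on_def)
  have "partition_on A ((P - {Bi, Bj}) \<union> {Bi \<union> Bj})"
  proof (rule partition_onI)
    show "\<Union>(P - {Bi, Bj} \<union> {Bi \<union> Bj}) = A" using \<open>\<Union>P = A\<close> Bi Bj by blast
    show "{} \<notin> P - {Bi, Bj} \<union> {Bi \<union> Bj}" using \<open>{} \<notin> P\<close> Bi by auto
    fix B C assume "B \<in> P - {Bi, Bj} \<union> {Bi \<union> Bj}" "C \<in> P - {Bi, Bj} \<union> {Bi \<union> Bj}" "B \<noteq> C"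
    then show "disjnt B C"
      using disj Bi(1) Bj(1) unfolding disjoint_def disjnt_def by (auto simp: Int_Un_distrib Int_Un_distrib2)
  qed
  then show ?thesis using merge_step_merged[OF False] unfolding Bi_def Bj_def by simp
qed

lemma merge_step_joins:
  assumes P: "partition_on A P" and i: "i \<in> A" and j: "j \<in> A"
  shows "\<exists>B\<in>merge_step P (i, j). i \<in> B \<and> j \<in> B"
proof (cases "\<exists>B\<in>P. i \<in> B \<and> j \<in> B")
  case True
  then show ?thesis by (simp add: merge_step_def)
next
  case False
  obtain "block_of P i \<in> P" "i \<in> block_of P i" using block_of_mem[OF P i] .
  moreover obtain "block_of P j \<in> P" "j \<in> block_of P j" using block_of_mem[OF P j] .
  ultimately show ?thesis using merge_step_merged[OF False] by auto
qed

lemma merge_step_coarsens: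
  assumes "B \<in> P"
  shows "\<exists>C\<in>merge_step P ij. B \<subseteq> C"
proof (cases "\<exists>B\<in>P. fst ij \<in> B \<and> snd ij \<in> B")
  case True
  then show ?thesis using assms by (auto simp: merge_step_def split: prod.split)
next
  case False
  then show ?thesis
    using assms merge_step_merged[of P "fst ij" "snd ij"] by (cases ij) auto
qed

lemma part_coarsens:
  assumes "k \<le> l" "B \<in> part n T w k"
  shows "\<exists>C\<in>part n T w l. B \<subseteq> C"
  using assms(1)
proof (induction l rule: dec_induct)
  case base
  then show ?case using assms(2) by blast
next
  case (step l)
  then obtain C where "C \<in> part n T w l" "B \<subseteq> C" by blast
  moreover have "\<exists>D\<in>part n T w (Suc l). C \<subseteq> D"
    unfolding part.simps by (rule merge_step_coarsens) fact
  ultimately show ?case by blast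
qed

lemma partition_on_part:
  assumes "\<forall>t\<in>{T - int k..<T}. w t \<in> pairs n"
  shows "partition_on {1..n} (part n T w k)"
  using assms
proof (induction k)
  case 0
  have "part n T w 0 = (\<lambda>i. {i}) ` {1..n}" by auto
  then show ?case using partition_on_singletons by metis
next
  case (Suc k)
  then have P: "partition_on {1..n} (part n T w k)" by simp
  obtain i j where "w (T - int k - 1) = (i, j)" "i \<in> {1..n}" "j \<in> {1..n}"
    using Suc.prems by (force simp: pairs_def)
  then show ?case using partition_on_merge_step[OF P] by simp
qed

lemma part_joins:
  assumes w: "\<forall>t\<in>{T - int k..<T}. w t \<in> pairs n" and t: "t \<in> {T - int k..<T}"
  shows "\<exists>B\<in>part n T w k. fst (w t) \<in> B \<and> snd (w t) \<in> B"
proof -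
  define k' where "k' = nat (T - t - 1)"
  have k': "k' < k" "t = T - int k' - 1" using t unfolding k'_def by auto
  then have P: "partition_on {1..n} (part n T w k')"
    using w by (intro partition_on_part) auto
  obtain i j where ij: "w t = (i, j)" "i \<in> {1..n}" "j \<in> {1..n}"
    using w t by (force simp: pairs_def)
  have "part n T w (Suc k') = merge_step (part n T w k') (i, j)"
    using k'(2) ij(1) by simp
  then obtain B where B: "B \<in> part n T w (Suc k')" "i \<in> B" "j \<in> B"
    using merge_step_joins[OF P ij(2,3)] by auto
  obtain C where "C \<in> part n T w k" "B \<subseteq> C"
    using part_coarsens[OF _ B(1)] k'(1) Suc_leI by blast
  then show ?thesis using B ij(1) by auto
qed

definition non_crossing_pairs :: "nat \<Rightarrow> nat set \<Rightarrow> (nat \<times> nat) set" where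
  "non_crossing_pairs n S = {p \<in> pairs n. fst p \<in> S \<longleftrightarrow> snd p \<in> S}"

definition small_subsets :: "nat \<Rightarrow> nat set set" where
  "small_subsets n = {S. S \<subseteq> {1..n} \<and> S \<noteq> {} \<and> 2 * card S \<le> n}"

lemma finite_pairs: "finite (pairs n)"
  by (rule finite_subset[of _ "{1..n} \<times> {1..n}"]) (auto simp: pairs_def)

lemma finite_small_subsets: "finite (small_subsets n)"
  by (rule finite_subset[of _ "Pow {1..n}"]) (auto simp: small_subsets_def)

lemma non_crossing_pairs_complement:
  "non_crossing_pairs n ({1..n} - S) = non_crossing_pairs n S"
  by (auto simp: non_crossing_pairs_def pairs_def)

lemma small_side_exists:
  assumes "S \<subseteq> {1..n}" "S \<noteq> {}" "S \<noteq> {1..n}"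
  shows "\<exists>S'\<in>small_subsets n. non_crossing_pairs n S' = non_crossing_pairs n S"
proof (cases "2 * card S \<le> n")
  case True
  then show ?thesis using assms by (auto simp: small_subsets_def)
next
  case False
  have "card ({1..n} - S) = n - card S"
    using assms(1) by (simp add: card_Diff_subset finite_subset)
  then have "{1..n} - S \<in> small_subsets n"
    using False assms by (auto simp: small_subsets_def)
  then show ?thesis using non_crossing_pairs_complement by blast
qed

lemma part_disconnected_imp_non_crossing:
  assumes n: "n \<ge> 1" and w: "w \<in> PiE {T0..<T} (\<lambda>_. pairs n)"
    and disconnected: "part n T w (nat (T - T0)) \<noteq> {{1..n}}"
  shows "\<exists>S\<in>small_subsets n. \<forall>t\<in>{T0..<T}. w t \<in> non_crossing_pairs n S"
proof -
  define P where "P = part n T w (nat (T - T0))"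
  have window: "{T - int (nat (T - T0))..<T} = {T0..<T}" by auto
  then have P: "partition_on {1..n} P"
    unfolding P_def using w by (intro partition_on_part) auto
  have "\<exists>B\<in>P. B \<noteq> {1..n}"
  proof (rule ccontr)
    assume "\<not> (\<exists>B\<in>P. B \<noteq> {1..n})"
    then have "P \<subseteq> {{1..n}}" by blast
    moreover have "P \<noteq> {}" using partition_onD1[OF P] n by auto
    ultimately show False using disconnected unfolding P_def by blast
  qed
  then obtain B where B: "B \<in> P" "B \<noteq> {1..n}" by blast
  have "B \<subseteq> {1..n}" "B \<noteq> {}"
    using B(1) partition_onD1[OF P] partition_onD3[OF P] by auto
  then obtain S where S: "S \<in> small_subsets n" "non_crossing_pairs n S = non_crossing_pairs n B"
    using small_side_exists B(2) by blast
  have "w t \<in> non_crossing_pairs n B" if t: "t \<in> {T0..<T}" for t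
  proof -
    obtain C where C: "C \<in> P" "fst (w t) \<in> C" "snd (w t) \<in> C"
      using part_joins[of T "nat (T - T0)" w n t] w t unfolding window P_def by auto
    have "C = B \<or> C \<inter> B = {}"
      using partition_onD2[OF P] B(1) C(1) by (auto simp: disjoint_def)
    then have "fst (w t) \<in> B \<longleftrightarrow> snd (w t) \<in> B" using C by blast
    moreover have "w t \<in> pairs n" using w t by blast
    ultimately show ?thesis by (simp add: non_crossing_pairs_def)
  qed
  then show ?thesis using S by (metis atLeastLessThan_iff)
qed

lemma prob_pair_choices_all_in:
  assumes "A \<subseteq> pairs n" "pairs n \<noteq> {}"
  shows "measure_pmf.prob (pair_choices n T0 T) {w. \<forall>t\<in>{T0..<T}. w t \<in> A}
           = (card A / card (pairs n)) ^ nat (T - T0)"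
proof -
  have "PiE {T0..<T} (\<lambda>_. pairs n) \<inter> {w. \<forall>t\<in>{T0..<T}. w t \<in> A} = PiE {T0..<T} (\<lambda>_. A)"
    using assms(1) by (auto simp: PiE_def)
  moreover have "PiE {T0..<T} (\<lambda>_. pairs n) \<noteq> {}"
    using assms(2) by (simp add: PiE_eq_empty_iff)
  ultimately show ?thesis
    unfolding pair_choices_def
    by (simp add: measure_pmf_of_set finite_PiE finite_pairs card_PiE power_divide)
qed

lemma prob_part_connected_ge:
  assumes n: "n \<ge> 2"
  shows "measure_pmf.prob (pair_choices n T0 T) {w. part n T w (nat (T - T0)) = {{1..n}}}
     \<ge> 1 - (\<Sum>S\<in>small_subsets n. (card (non_crossing_pairs n S) / card (pairs n)) ^ nat (T - T0))"
proof -
  let ?p = "pair_choices n T0 T" and ?\<Omega> = "PiE {T0..<T} (\<lambda>_. pairs n)"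
  let ?good = "{w. part n T w (nat (T - T0)) = {{1..n}}}"
  let ?avoid = "\<lambda>S. {w. \<forall>t\<in>{T0..<T}. w t \<in> non_crossing_pairs n S}"
  have "(1, 2) \<in> pairs n" using n by (auto simp: pairs_def)
  then have nonempty: "pairs n \<noteq> {}" "?\<Omega> \<noteq> {}" by (auto simp: PiE_eq_empty_iff)
  have support: "set_pmf ?p = ?\<Omega>"
    unfolding pair_choices_def using nonempty by (simp add: finite_PiE finite_pairs)
  have bad: "(UNIV - ?good) \<inter> set_pmf ?p \<subseteq> (\<Union>S\<in>small_subsets n. ?avoid S)"
  proof
    fix w assume "w \<in> (UNIV - ?good) \<inter> set_pmf ?p"
    then have "w \<in> ?\<Omega>" "part n T w (nat (T - T0)) \<noteq> {{1..n}}" by (auto simp: support)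
    then obtain S where "S \<in> small_subsets n" "w \<in> ?avoid S"
      using part_disconnected_imp_non_crossing[of n w T0 T] n by auto
    then show "w \<in> (\<Union>S\<in>small_subsets n. ?avoid S)" by blast
  qed
  have "measure_pmf.prob ?p (UNIV - ?good) = measure_pmf.prob ?p ((UNIV - ?good) \<inter> set_pmf ?p)"
    by (rule measure_Int_set_pmf[symmetric])
  also have "\<dots> \<le> measure_pmf.prob ?p (\<Union>S\<in>small_subsets n. ?avoid S)"
    by (rule measure_pmf.finite_measure_mono[OF bad]) simp
  also have "\<dots> \<le> (\<Sum>S\<in>small_subsets n. measure_pmf.prob ?p (?avoid S))"
    by (rule measure_pmf.finite_measure_subadditive_finite) (auto simp: finite_small_subsets)
  also have "\<dots> = (\<Sum>S\<in>small_subsets n. (card (non_crossing_pairs n S) / card (pairs n)) ^ nat (T - T0))"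
    using nonempty(1) by (intro sum.cong refl prob_pair_choices_all_in) (auto simp: non_crossing_pairs_def)
  finally show ?thesis
    using measure_pmf.prob_compl[of ?good ?p] by simp
qed

lemma card_pairs_le: "2 * card (pairs n) \<le> n\<^sup>2"
proof -
  let ?swap = "(\<lambda>(a, b). (b, a)) ` pairs n"
  have "card ?swap = card (pairs n)" by (rule card_image) (auto simp: inj_on_def)
  moreover have "card (pairs n \<union> ?swap) = card (pairs n) + card ?swap"
    by (rule card_Un_disjoint) (use finite_pairs in \<open>auto simp: pairs_def\<close>)
  moreover have "card (pairs n \<union> ?swap) \<le> card ({1..n} \<times> {1..n})"
    by (rule card_mono) (auto simp: pairs_def)
  ultimately show ?thesis by (simp add: power2_eq_square)
qed

lemma card_crossing_pairs_ge:
  assumes "S \<subseteq> {1..n}"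
  shows "card S * (n - card S) \<le> card (pairs n - non_crossing_pairs n S)"
proof -
  let ?sort = "\<lambda>(a, b). (min a b, max a b)"
  have "card (S \<times> ({1..n} - S)) = card S * (n - card S)"
    using assms by (simp add: card_cartesian_product card_Diff_subset finite_subset)
  moreover have inj: "inj_on ?sort (S \<times> ({1..n} - S))"
    by (rule inj_on_inverseI[where g = "\<lambda>(a, b). if a \<in> S then (a, b) else (b, a)"])
       (auto simp: min_def max_def)
  moreover have sub: "?sort ` (S \<times> ({1..n} - S)) \<subseteq> pairs n - non_crossing_pairs n S"
  proof (rule image_subsetI)
    fix p assume "p \<in> S \<times> ({1..n} - S)"
    then obtain a b where p: "p = (a, b)" "a \<in> S" "b \<in> {1..n}" "b \<notin> S" by blast
    then have "a \<in> {1..n}" "a \<noteq> b" using assms by auto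
    then show "?sort p \<in> pairs n - non_crossing_pairs n S"
      using p by (cases "a < b") (auto simp: pairs_def non_crossing_pairs_def min_def max_def)
  qed
  ultimately show ?thesis
    using card_inj_on_le[OF inj sub] finite_pairs by simp
qed

lemma non_crossing_fraction_le:
  assumes n: "n \<ge> 2" and S: "S \<subseteq> {1..n}"
  shows "card (non_crossing_pairs n S) / card (pairs n)
           \<le> 1 - 2 * real (card S) * (real n - real (card S)) / (real n)\<^sup>2"
proof -
  define N k where "N = card (pairs n)" and "k = card S"
  have "k \<le> n" using card_mono[OF _ S] unfolding k_def by simp
  have "(1, 2) \<in> pairs n" using n by (auto simp: pairs_def)
  then have N: "N > 0" unfolding N_def using finite_pairs card_gt_0_iff by blast
  have "non_crossing_pairs n S \<subseteq> pairs n" by (auto simp: non_crossing_pairs_def)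
  then have "card (non_crossing_pairs n S) + card (pairs n - non_crossing_pairs n S) = N"
    unfolding N_def by (metis card_Diff_subset finite_pairs finite_subset card_mono le_add_diff_inverse)
  then have "card (non_crossing_pairs n S) + k * (n - k) \<le> N"
    using card_crossing_pairs_ge[OF S] unfolding k_def by linarith
  then have "real (card (non_crossing_pairs n S)) + real (k * (n - k)) \<le> N"
    by (metis of_nat_add of_nat_mono)
  then have "real (card (non_crossing_pairs n S)) \<le> N - real k * (real n - real k)"
    using \<open>k \<le> n\<close> by (simp add: of_nat_diff)
  then have "card (non_crossing_pairs n S) / N \<le> 1 - real k * (real n - real k) / N"
    using N by (simp add: field_simps)
  moreover have "2 * real N \<le> (real n)\<^sup>2"
    using card_pairs_le[of n] unfolding N_def
    by (metis of_nat_le_iff of_nat_mult of_nat_numeral of_nat_power)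
  then have "real k * (real n - real k) / ((real n)\<^sup>2 / 2) \<le> real k * (real n - real k) / N"
    using N n \<open>k \<le> n\<close> by (intro divide_left_mono) auto
  then have "2 * real k * (real n - real k) / (real n)\<^sup>2 \<le> real k * (real n - real k) / N"
    by (simp add: field_simps)
  ultimately show ?thesis unfolding N_def k_def by linarith
qed

lemma crossing_exponent_powr_le:
  fixes x \<epsilon> :: real and k :: nat
  assumes x: "x \<ge> 1" and \<epsilon>: "\<epsilon> > 0" and k: "2 * real k \<le> x"
  shows "x powr (- ((1 + 4*\<epsilon>) * k * (x - k) / x)) \<le> (x powr (- (1 + 2*\<epsilon>))) ^ k + x powr (- \<epsilon> * x)"
proof (cases "(1 + 4*\<epsilon>) * k \<le> 2 * \<epsilon> * x")
  case True
  then have "(1 + 2*\<epsilon>) * x \<le> (1 + 4*\<epsilon>) * (x - k)"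
    by (simp add: algebra_simps)
  then have "(1 + 2*\<epsilon>) * x * k \<le> (1 + 4*\<epsilon>) * (x - k) * k"
    by (rule mult_right_mono) simp
  then have "(1 + 2*\<epsilon>) * k \<le> (1 + 4*\<epsilon>) * k * (x - k) / x"
    using x by (simp add: field_simps)
  then have "x powr (- ((1 + 4*\<epsilon>) * k * (x - k) / x)) \<le> x powr (k * - (1 + 2*\<epsilon>))"
    using x by (intro powr_mono) (auto simp: algebra_simps)
  also have "\<dots> = (x powr (- (1 + 2*\<epsilon>))) ^ k"
    using x by (simp add: powr_power)
  finally show ?thesis by (smt (verit) powr_ge_zero)
next
  case False
  have "\<epsilon> * x * x \<le> (1 + 4*\<epsilon>) * k / 2 * x"
    using False x by (intro mult_right_mono) auto
  also have "\<dots> \<le> (1 + 4*\<epsilon>) * k * (x - k)"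
    using k \<epsilon> by (simp add: mult_left_mono)
  finally have "\<epsilon> * x \<le> (1 + 4*\<epsilon>) * k * (x - k) / x"
    using x by (simp add: field_simps)
  then have "x powr (- ((1 + 4*\<epsilon>) * k * (x - k) / x)) \<le> x powr (- \<epsilon> * x)"
    using x by (intro powr_mono) auto
  then show ?thesis by (smt (verit) powr_ge_zero zero_le_power)
qed

lemma non_crossing_fraction_power_le:
  fixes \<epsilon> :: real
  assumes n: "n \<ge> 2" and \<epsilon>: "\<epsilon> > 0" and S: "S \<in> small_subsets n"
    and m: "real m \<ge> (1/2 + 2*\<epsilon>) * n * ln n"
  shows "(card (non_crossing_pairs n S) / card (pairs n)) ^ m
           \<le> (real n powr (- (1 + 2*\<epsilon>))) ^ card S + real n powr (- \<epsilon> * n)"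
proof -
  define q where "q = card (non_crossing_pairs n S) / card (pairs n)"
  define k where "k = real (card S)"
  define y where "y = 2 * k * (n - k) / (real n)\<^sup>2"
  have Ssub: "S \<subseteq> {1..n}" and k: "2 * k \<le> n"
    using S unfolding small_subsets_def k_def by (auto simp flip: of_nat_le_iff)
  have "q \<ge> 0" unfolding q_def by simp
  moreover have "q \<le> 1 - y"
    using non_crossing_fraction_le[OF n Ssub] unfolding q_def y_def k_def .
  moreover have "y \<ge> 0" unfolding y_def using k by (simp add: k_def)
  ultimately have "q ^ m \<le> exp (- y) ^ m"
    by (intro power_mono) (use exp_ge_add_one_self[of "- y"] in auto)
  also have "\<dots> = exp (- (y * m))" by (simp add: exp_of_nat_mult[symmetric] algebra_simps)
  also have "\<dots> \<le> exp (- (y * ((1/2 + 2*\<epsilon>) * n * ln n)))"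
    using m \<open>y \<ge> 0\<close> by (simp add: mult_left_mono)
  also have "\<dots> = real n powr (- ((1 + 4*\<epsilon>) * k * (n - k) / n))"
    using n unfolding y_def by (simp add: powr_def field_simps power2_eq_square)
  also have "\<dots> \<le> (real n powr (- (1 + 2*\<epsilon>))) ^ card S + real n powr (- \<epsilon> * n)"
    using crossing_exponent_powr_le[of n \<epsilon> "card S"] n \<epsilon> k unfolding k_def by simp
  finally show ?thesis unfolding q_def .
qed

lemma sum_power_card_Pow:
  fixes x :: "'a :: comm_semiring_1"
  assumes "finite A"
  shows "(\<Sum>S\<in>Pow A. x ^ card S) = (1 + x) ^ card A"
  using prod_add[OF assms, of "\<lambda>_. x" "\<lambda>_. 1"] assms
  by (simp add: add.commute finite_subset)

lemma sum_non_crossing_fraction_power_le: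
  fixes \<epsilon> :: real
  assumes n: "n \<ge> 2" and \<epsilon>: "\<epsilon> > 0" and m: "real m \<ge> (1/2 + 2*\<epsilon>) * n * ln n"
  shows "(\<Sum>S\<in>small_subsets n. (card (non_crossing_pairs n S) / card (pairs n)) ^ m)
           \<le> (1 + real n powr (- (1 + 2*\<epsilon>))) ^ n - 1 + 2 ^ n * real n powr (- \<epsilon> * n)"
proof -
  define x z where "x = real n powr (- (1 + 2*\<epsilon>))" and "z = real n powr (- \<epsilon> * n)"
  have "(\<Sum>S\<in>small_subsets n. (card (non_crossing_pairs n S) / card (pairs n)) ^ m)
          \<le> (\<Sum>S\<in>small_subsets n. x ^ card S + z)"
    by (intro sum_mono) (use non_crossing_fraction_power_le[OF n \<epsilon> _ m] in \<open>simp add: x_def z_def\<close>)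
  also have "\<dots> = (\<Sum>S\<in>small_subsets n. x ^ card S) + card (small_subsets n) * z"
    by (simp add: sum.distrib)
  also have "(\<Sum>S\<in>small_subsets n. x ^ card S) \<le> (\<Sum>S\<in>Pow {1..n} - {{}}. x ^ card S)"
    by (intro sum_mono2) (auto simp: small_subsets_def x_def)
  also have "\<dots> = (1 + x) ^ n - 1"
    using sum_power_card_Pow[of "{1..n}" x] by (simp add: sum_diff1)
  also have "card (small_subsets n) * z \<le> 2 ^ n * z"
  proof -
    have "card (small_subsets n) \<le> card (Pow {1..n})"
      by (rule card_mono) (auto simp: small_subsets_def)
    then show ?thesis unfolding z_def by (intro mult_right_mono) (auto simp: card_Pow)
  qed
  finally show ?thesis unfolding x_def z_def by simp
qed

lemma eventually_union_bound_le:
  fixes \<epsilon> :: real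
  assumes "\<epsilon> > 0"
  shows "eventually (\<lambda>n. (1 + real n powr (- (1 + 2*\<epsilon>))) ^ n - 1 + 2 ^ n * real n powr (- \<epsilon> * n)
                         \<le> 2 * real n powr (- \<epsilon>)) sequentially"
proof -
  have "eventually (\<lambda>x. (1 + x powr (- (1 + 2*\<epsilon>))) powr x - 1 + 2 powr x * x powr (- \<epsilon> * x)
                         \<le> 2 * x powr (- \<epsilon>)) at_top"
    using assms by real_asymp
  then show ?thesis
    by (rule eventually_compose_filterlim[OF _ filterlim_real_sequentially, THEN eventually_mono])
       (simp add: powr_realpow add_pos_nonneg)
qed

theorem lemma4p3:
  fixes \<epsilon> :: real
  assumes "\<epsilon> > 0"
  shows "\<exists>N0::nat. \<forall>n::nat. n > N0 \<longrightarrow> (\<forall>T0 T :: int.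
           real_of_int T > real_of_int T0 + (1/2 + 2*\<epsilon>) * real n * ln (real n) \<longrightarrow>
           measure_pmf.prob (pair_choices n T0 T)
             {w. part n T w (nat (T - T0)) = {{1..n}}} \<ge> 1 - 2 * real n powr (-\<epsilon>))"
proof -
  obtain N where N: "\<And>n. n \<ge> N \<Longrightarrow> (1 + real n powr (- (1 + 2*\<epsilon>))) ^ n - 1
                                       + 2 ^ n * real n powr (- \<epsilon> * n) \<le> 2 * real n powr (- \<epsilon>)"
    using eventually_union_bound_le[OF assms] unfolding eventually_sequentially by blast
  show ?thesis
  proof (intro exI[of _ "max 2 N"] allI impI)
    fix n :: nat and T0 T :: int
    assume n: "n > max 2 N"
      and T: "real_of_int T > real_of_int T0 + (1/2 + 2*\<epsilon>) * real n * ln (real n)"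
    have "(1/2 + 2*\<epsilon>) * real n * ln (real n) \<ge> 0" using assms n by simp
    then have m: "real (nat (T - T0)) \<ge> (1/2 + 2*\<epsilon>) * real n * ln (real n)"
      using T by linarith
    have "1 - 2 * real n powr (- \<epsilon>) \<le> 1 - (\<Sum>S\<in>small_subsets n.
            (card (non_crossing_pairs n S) / card (pairs n)) ^ nat (T - T0))"
      using sum_non_crossing_fraction_power_le[OF _ assms m] N[of n] n by simp
    also have "\<dots> \<le> measure_pmf.prob (pair_choices n T0 T) {w. part n T w (nat (T - T0)) = {{1..n}}}"
      using prob_part_connected_ge n by simp
    finally show "measure_pmf.prob (pair_choices n T0 T) {w. part n T w (nat (T - T0)) = {{1..n}}}
                    \<ge> 1 - 2 * real n powr (- \<epsilon>)" .
  qed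
qed

end
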